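(* Let $G$ be a finite graph with node set $V(G)$, at least one edge, and maximal degree $\deg G=\max_{u\in V(G)}|N_G(u)|$. Let $O:\mathbb{R}^{V(G)}\times\mathbb{R}^{V(G)}\to\mathbb{R}^{V(G)}$ be a transition function that is local, i.e. for every node $u$ the component $O(o,d)_u$ depends only on $(o_w)_{w\in N_G(u)\cup\{u\}}$ and on $d_u$, and that satisfies, for constants $C_s>0$, $C_d>0$, $0<\alpha\le 1$, $$\|O(o,d)-O(o',d')\|_1\le C_s\|o-o'\|_1+C_d\|d-d'\|_1^{\alpha}\quad\text{for all }o,o',d,d'\in\mathbb{R}^{V(G)},$$ with $C_s<1/(\deg G+1)$. For $D\in\mathbb{R}^{V(G)}$ let $O(D)$ denote the steady-state observable, i.e. the unique fixed point of $O(\cdot,D)$. Let $D\in\mathbb{R}^{V(G)}$ be a (constant/mean) demand pattern, fix a node $v$ and $a>0$, and let $A\in\mathbb{R}^{V(G)}$ be the anomaly at $v$ given by $A_w=\delta_{vw}a$. Then for every node $w$, $$|O(D)_w-O(D+A)_w|\ \begin{cases}=0,& d_G(w,v)=\infty,\\[2pt] <\dfrac{C_d\,a^{\alpha}\,\big(C_s(\deg G+1)\big)^{d_G(v,w)}}{1-C_s(\deg G+1)},&\text{otherwise.}\end{cases}$$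
   Context: $N_G(u)$ is the set of neighbours of $u$ in $G$; $d_G(u,v)$ is the length of a shortest path in $G$ connecting $u$ and $v$ ($=\infty$ if no such path exists); $\delta_{vw}$ is the Kronecker delta; $\|\cdot\|_1$ is the $\ell^1$-norm. Since $C_s<1$, $O(\cdot,D)$ is a contraction, so the fixed point $O(D)$ exists and is unique. *)

theory Defs
  imports "HOL-Analysis.Analysis" "HOL-Library.Extended_Nat"
begin

text \<open>A finite graph: vertex type 'v of class finite, edge relation E (symmetric, irreflexive).\<close>

definition nbrs :: "('v \<Rightarrow> 'v \<Rightarrow> bool) \<Rightarrow> 'v \<Rightarrow> 'v set" where
  "nbrs E u = {w. E u w}"

definition maxdeg :: "('v::finite \<Rightarrow> 'v \<Rightarrow> bool) \<Rightarrow> nat" where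
  "maxdeg E = Max (range (\<lambda>u. card (nbrs E u)))"

definition walk :: "('v \<Rightarrow> 'v \<Rightarrow> bool) \<Rightarrow> nat \<Rightarrow> 'v \<Rightarrow> 'v \<Rightarrow> bool" where
  "walk E n u v \<longleftrightarrow> (\<exists>f::nat \<Rightarrow> 'v. f 0 = u \<and> f n = v \<and> (\<forall>i<n. E (f i) (f (Suc i))))"

text \<open>Graph distance: length of a shortest path, \<infinity> if none exists (Inf {} = \<infinity>).\<close>
definition gdist :: "('v \<Rightarrow> 'v \<Rightarrow> bool) \<Rightarrow> 'v \<Rightarrow> 'v \<Rightarrow> enat" where
  "gdist E u v = Inf {enat n | n. walk E n u v}"

definition l1norm :: "('v::finite \<Rightarrow> real) \<Rightarrow> real" where
  "l1norm x = (\<Sum>u\<in>UNIV. \<bar>x u\<bar>)"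

definition steady_state :: "(('v \<Rightarrow> real) \<Rightarrow> ('v \<Rightarrow> real) \<Rightarrow> ('v \<Rightarrow> real)) \<Rightarrow> ('v \<Rightarrow> real) \<Rightarrow> ('v \<Rightarrow> real)" where
  "steady_state T D = (THE x. T x D = x)"

end

theory Submission
  imports Defs
begin

text \<open>
  With the \<open>\<ell>\<^sup>1\<close> distance the observable space is complete, so \<open>O(\<cdot>, D)\<close> has a unique
  fixed point by Banach's theorem, and the Lipschitz bound gives
  \<open>\<parallel>x - y\<parallel>\<^sub>1 \<le> C\<^sub>d a\<^sup>\<alpha> / (1 - C\<^sub>s)\<close> for the steady states \<open>x\<close>, \<open>y\<close> under \<open>D\<close> and \<open>D + A\<close>.
  At a node \<open>u \<noteq> v\<close> the two demands agree, so by locality \<open>x\<^sub>u - y\<^sub>u\<close> is the \<open>u\<close>-component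
  of \<open>O(x, D) - O(z, D)\<close>, where \<open>z\<close> agrees with \<open>y\<close> on the closed neighbourhood of \<open>u\<close> and
  with \<open>x\<close> elsewhere. Hence \<open>|x\<^sub>u - y\<^sub>u|\<close> is at most \<open>C\<^sub>s\<close> times the sum of at most
  \<open>deg G + 1\<close> differences at nodes one step closer to \<open>v\<close>, and induction on the distance
  from \<open>v\<close> produces the factor \<open>(C\<^sub>s (deg G + 1))\<^sup>k\<close>, which forces the difference to vanish
  at nodes not connected to \<open>v\<close>.
\<close>

lemma l1norm_nonneg: "0 \<le> l1norm (x :: 'v::finite \<Rightarrow> real)"
  unfolding l1norm_def by (simp add: sum_nonneg)

lemma abs_le_l1norm: "\<bar>x u\<bar> \<le> l1norm (x :: 'v::finite \<Rightarrow> real)"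
  unfolding l1norm_def by (rule member_le_sum) auto

lemma l1norm_eq_0_iff: "l1norm (x :: 'v::finite \<Rightarrow> real) = 0 \<longleftrightarrow> x = (\<lambda>_. 0)"
  unfolding l1norm_def by (auto simp: sum_nonneg_eq_0_iff fun_eq_iff)

definition l1dist :: "('v::finite \<Rightarrow> real) \<Rightarrow> ('v \<Rightarrow> real) \<Rightarrow> real" where
  "l1dist x y = l1norm (\<lambda>u. x u - y u)"

lemma l1dist_nonneg: "0 \<le> l1dist x y"
  unfolding l1dist_def by (rule l1norm_nonneg)

lemma l1dist_self [simp]: "l1dist x x = 0"
  unfolding l1dist_def l1norm_def by simp

lemma abs_diff_le_l1dist: "\<bar>x u - y u\<bar> \<le> l1dist x y"
  unfolding l1dist_def by (rule abs_le_l1norm)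

lemma Metric_space_l1dist: "Metric_space UNIV (l1dist :: ('v::finite \<Rightarrow> real) \<Rightarrow> _)"
proof
  fix x y z :: "'v \<Rightarrow> real"
  show "0 \<le> l1dist x y" by (rule l1dist_nonneg)
  show "l1dist x y = l1dist y x" unfolding l1dist_def l1norm_def by (simp add: abs_minus_commute)
  show "l1dist x y = 0 \<longleftrightarrow> x = y" unfolding l1dist_def l1norm_eq_0_iff by (auto simp: fun_eq_iff)
  show "l1dist x z \<le> l1dist x y + l1dist y z"
    unfolding l1dist_def l1norm_def sum.distrib[symmetric] by (rule sum_mono) linarith
qed

lemma mcomplete_l1dist: "Metric_space.mcomplete UNIV (l1dist :: ('v::finite \<Rightarrow> real) \<Rightarrow> _)"
  unfolding Metric_space.mcomplete_def[OF Metric_space_l1dist]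
proof (intro allI impI)
  fix \<sigma> :: "nat \<Rightarrow> 'v::finite \<Rightarrow> real"
  assume \<sigma>: "Metric_space.MCauchy UNIV l1dist \<sigma>"
  have "Cauchy (\<lambda>n. \<sigma> n u)" for u
  proof (rule CauchyI)
    fix \<epsilon> :: real
    assume "0 < \<epsilon>"
    then obtain N where N: "\<And>m n. N \<le> m \<Longrightarrow> N \<le> n \<Longrightarrow> l1dist (\<sigma> m) (\<sigma> n) < \<epsilon>"
      using \<sigma> unfolding Metric_space.MCauchy_def[OF Metric_space_l1dist] by blast
    have "norm (\<sigma> m u - \<sigma> n u) < \<epsilon>" if "N \<le> m" "N \<le> n" for m n
      using abs_diff_le_l1dist[of "\<sigma> m" u "\<sigma> n"] N[OF that] by simp
    then show "\<exists>M. \<forall>m\<ge>M. \<forall>n\<ge>M. norm (\<sigma> m u - \<sigma> n u) < \<epsilon>"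
      by blast
  qed
  then have "convergent (\<lambda>n. \<sigma> n u)" for u
    by (simp add: Cauchy_convergent_iff)
  then obtain L where L: "(\<lambda>n. \<sigma> n u) \<longlonglongrightarrow> L u" for u
    unfolding convergent_def by metis
  have "(\<lambda>n. l1dist (\<sigma> n) L) \<longlonglongrightarrow> 0"
    unfolding l1dist_def l1norm_def
  proof (rule tendsto_null_sum)
    fix u
    show "(\<lambda>n. \<bar>\<sigma> n u - L u\<bar>) \<longlonglongrightarrow> 0"
      using tendsto_rabs[OF LIM_zero[OF L]] by simp
  qed
  then show "\<exists>L. limitin (Metric_space.mtopology UNIV l1dist) \<sigma> L sequentially"
    by (auto simp: Metric_space.limitin_metric_dist_null[OF Metric_space_l1dist])
qed

lemma l1dist_contraction_ex1_fixpoint: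
  fixes F :: "('v::finite \<Rightarrow> real) \<Rightarrow> ('v \<Rightarrow> real)"
  assumes "\<And>x y. l1dist (F x) (F y) \<le> c * l1dist x y" and "c < 1"
  shows "\<exists>!x. F x = x"
proof -
  obtain x where "F x = x"
    by (rule Metric_space.Banach_fixedpoint_thm[OF Metric_space_l1dist mcomplete_l1dist _ _ assms(2)])
      (use assms(1) in auto)
  moreover have "y = z" if "F y = y" "F z = z" for y z
    by (rule Metric_space.contraction_imp_unique_fixpoint[OF Metric_space_l1dist that _ assms(2)])
      (use assms(1) in auto)
  ultimately show ?thesis by blast
qed

lemma walk_refl: "walk E 0 u u"
  unfolding walk_def by auto

lemma walk_snoc:
  assumes "walk E n u v" and "E v x"
  shows "walk E (Suc n) u x"
proof -
  obtain f where "f 0 = u" "f n = v" "\<forall>i<n. E (f i) (f (Suc i))"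
    using assms(1) unfolding walk_def by blast
  with assms(2) show ?thesis
    unfolding walk_def by (intro exI[of _ "f(Suc n := x)"]) (auto simp: less_Suc_eq)
qed

lemma walk_rev:
  assumes sym: "\<And>x y. E x y \<Longrightarrow> E y x" and "walk E n u v"
  shows "walk E n v u"
proof -
  obtain f where f: "f 0 = u" "f n = v" "\<forall>i<n. E (f i) (f (Suc i))"
    using assms(2) unfolding walk_def by blast
  have "E (f (n - i)) (f (n - Suc i))" if "i < n" for i
    using f(3)[rule_format, of "n - Suc i"] that sym by (simp add: Suc_diff_Suc)
  with f show ?thesis
    unfolding walk_def by (intro exI[of _ "\<lambda>i. f (n - i)"]) auto
qed

lemma enat_le_gdist_iff: "enat k \<le> gdist E u v \<longleftrightarrow> (\<forall>n. walk E n u v \<longrightarrow> k \<le> n)"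
  unfolding gdist_def by (auto simp: le_Inf_iff)

lemma gdist_le_walk: "walk E n u v \<Longrightarrow> gdist E u v \<le> enat n"
  unfolding gdist_def by (rule Inf_lower) auto

lemma gdist_refl: "gdist E u u = 0"
  using gdist_le_walk[OF walk_refl, of E u] by (simp add: zero_enat_def[symmetric])

lemma gdist_sym:
  assumes "\<And>x y. E x y \<Longrightarrow> E y x"
  shows "gdist E u v = gdist E v u"
proof -
  have "{enat n |n. walk E n u v} = {enat n |n. walk E n v u}"
    using walk_rev[of E, OF assms] by blast
  then show ?thesis
    unfolding gdist_def by simp
qed

lemma card_closed_nbhd_le: "card (insert u (nbrs E u)) \<le> maxdeg E + 1"
proof -
  have "card (nbrs E u) \<le> maxdeg E"
    unfolding maxdeg_def by (rule Max_ge) auto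
  moreover have "card (insert u (nbrs E u)) \<le> Suc (card (nbrs E u))"
    by (simp add: card_insert_if)
  ultimately show ?thesis
    by simp
qed

lemma maxdeg_pos:
  assumes "E x y"
  shows "1 \<le> maxdeg E"
proof -
  have "nbrs E x \<noteq> {}"
    using assms by (auto simp: nbrs_def)
  then have "1 \<le> card (nbrs E x)"
    by (simp add: Suc_le_eq card_gt_0_iff)
  also have "\<dots> \<le> maxdeg E"
    unfolding maxdeg_def by (rule Max_ge) auto
  finally show ?thesis .
qed

lemma l1dist_add_point_mass: "0 \<le> a \<Longrightarrow> l1dist D (\<lambda>u. D u + (if u = v then a else 0)) = a"
proof -
  assume "0 \<le> a"
  then have "l1dist D (\<lambda>u. D u + (if u = v then a else 0)) = (\<Sum>u\<in>UNIV. if u = v then a else 0)"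
    unfolding l1dist_def l1norm_def by (intro sum.cong) auto
  then show ?thesis
    by simp
qed

lemma steady_state_fixpoint:
  assumes "\<And>o1 o2. l1dist (T o1 D) (T o2 D) \<le> c * l1dist o1 o2" and "c < 1"
  shows "T (steady_state T D) D = steady_state T D"
  unfolding steady_state_def by (rule theI' [OF l1dist_contraction_ex1_fixpoint [OF assms]])

lemma l1dist_fixpoints_le:
  fixes T :: "('v::finite \<Rightarrow> real) \<Rightarrow> ('v \<Rightarrow> real) \<Rightarrow> ('v \<Rightarrow> real)"
  assumes lip: "\<And>o1 o2 d1 d2. l1dist (T o1 d1) (T o2 d2) \<le> Cs * l1dist o1 o2 + Cd * l1dist d1 d2 powr \<alpha>"
    and "T x D = x" and "T y D' = y" and "Cs < 1"
  shows "l1dist x y \<le> Cd * l1dist D D' powr \<alpha> / (1 - Cs)"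
proof -
  have "l1dist x y \<le> Cs * l1dist x y + Cd * l1dist D D' powr \<alpha>"
    using lip[of x D y D'] assms(2,3) by simp
  with \<open>Cs < 1\<close> show ?thesis
    by (simp add: field_simps)
qed

lemma local_fixpoint_diff_le:
  fixes T :: "('v::finite \<Rightarrow> real) \<Rightarrow> ('v \<Rightarrow> real) \<Rightarrow> ('v \<Rightarrow> real)"
  assumes local: "\<And>o1 o2 d1 d2 u. (\<forall>w. (E u w \<or> w = u) \<longrightarrow> o1 w = o2 w) \<Longrightarrow> d1 u = d2 u
                  \<Longrightarrow> T o1 d1 u = T o2 d2 u"
    and contr: "\<And>o1 o2 d. l1dist (T o1 d) (T o2 d) \<le> Cs * l1dist o1 o2"
    and "T x D = x" and "T y D' = y" and "D u = D' u"
  shows "\<bar>x u - y u\<bar> \<le> Cs * (\<Sum>w\<in>insert u (nbrs E u). \<bar>x w - y w\<bar>)"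
proof -
  define z where "z w = (if w \<in> insert u (nbrs E u) then y w else x w)" for w
  have "T z D u = T y D' u"
    using \<open>D u = D' u\<close> by (intro local) (auto simp: z_def nbrs_def)
  then have "\<bar>x u - y u\<bar> = \<bar>T x D u - T z D u\<bar>"
    using assms(3,4) by metis
  also have "\<dots> \<le> l1dist (T x D) (T z D)"
    by (rule abs_diff_le_l1dist)
  also have "\<dots> \<le> Cs * l1dist x z"
    by (rule contr)
  also have "l1dist x z = (\<Sum>w\<in>UNIV. if w \<in> insert u (nbrs E u) then \<bar>x w - y w\<bar> else 0)"
    unfolding l1dist_def l1norm_def z_def by (intro sum.cong) auto
  also have "\<dots> = (\<Sum>w\<in>insert u (nbrs E u). \<bar>x w - y w\<bar>)"
    by (rule sum.mono_neutral_cong_right) auto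
  finally show ?thesis .
qed

lemma decay_along_gdist:
  fixes \<delta> :: "'v::finite \<Rightarrow> real"
  assumes sym: "\<And>x y. E x y \<Longrightarrow> E y x"
    and bound: "\<And>u. \<delta> u \<le> B"
    and local: "\<And>u. u \<noteq> v \<Longrightarrow> \<delta> u \<le> Cs * (\<Sum>w\<in>insert u (nbrs E u). \<delta> w)"
    and "0 \<le> Cs" and "0 \<le> B"
  shows "enat k \<le> gdist E v u \<Longrightarrow> \<delta> u \<le> (Cs * (real (maxdeg E) + 1)) ^ k * B"
proof (induction k arbitrary: u)
  case 0
  then show ?case using bound by simp
next
  case (Suc k)
  let ?c = "Cs * (real (maxdeg E) + 1)"
  have "u \<noteq> v"
    using Suc.prems gdist_refl[of E v] by (auto simp: zero_enat_def)
  have "\<delta> w \<le> ?c ^ k * B" if "w \<in> insert u (nbrs E u)" for w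
  proof (rule Suc.IH)
    have "k \<le> n" if "walk E n v w" for n
    proof (cases "w = u")
      case True
      then show ?thesis using Suc.prems that by (auto simp: enat_le_gdist_iff)
    next
      case False
      with \<open>w \<in> insert u (nbrs E u)\<close> have "E w u"
        using sym by (auto simp: nbrs_def)
      with that have "walk E (Suc n) v u"
        by (rule walk_snoc)
      then show ?thesis using Suc.prems by (auto simp: enat_le_gdist_iff)
    qed
    then show "enat k \<le> gdist E v w"
      by (simp add: enat_le_gdist_iff)
  qed
  then have "(\<Sum>w\<in>insert u (nbrs E u). \<delta> w) \<le> card (insert u (nbrs E u)) * (?c ^ k * B)"
    by (rule sum_bounded_above)
  also have "\<dots> \<le> (real (maxdeg E) + 1) * (?c ^ k * B)"
    using card_closed_nbhd_le[of u E] \<open>0 \<le> Cs\<close> \<open>0 \<le> B\<close>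
    by (intro mult_right_mono) auto
  finally show ?case
    using local[OF \<open>u \<noteq> v\<close>] \<open>0 \<le> Cs\<close>
    by (simp add: mult_left_mono order_trans mult.assoc mult.left_commute)
qed

lemma fixpoint_diff_decay:
  fixes T :: "('v::finite \<Rightarrow> real) \<Rightarrow> ('v \<Rightarrow> real) \<Rightarrow> ('v \<Rightarrow> real)"
  assumes sym: "\<And>x y. E x y \<Longrightarrow> E y x"
    and local: "\<And>o1 o2 d1 d2 u. (\<forall>w. (E u w \<or> w = u) \<longrightarrow> o1 w = o2 w) \<Longrightarrow> d1 u = d2 u
                  \<Longrightarrow> T o1 d1 u = T o2 d2 u"
    and contr: "\<And>o1 o2 d. l1dist (T o1 d) (T o2 d) \<le> Cs * l1dist o1 o2" and "0 \<le> Cs"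
    and "T x D = x" and "T y D' = y" and "\<And>u. u \<noteq> v \<Longrightarrow> D u = D' u"
    and "enat k \<le> gdist E v w"
  shows "\<bar>x w - y w\<bar> \<le> (Cs * (real (maxdeg E) + 1)) ^ k * l1dist x y"
  using sym abs_diff_le_l1dist local_fixpoint_diff_le[OF local contr assms(5,6,7)] assms(4)
    l1dist_nonneg assms(8)
  by (rule decay_along_gdist)

lemma nonpos_if_le_geometric:
  fixes t c B :: real
  assumes "\<And>k. t \<le> c ^ k * B" and "0 \<le> c" and "c < 1"
  shows "t \<le> 0"
proof -
  have "(\<lambda>k. c ^ k * B) \<longlonglongrightarrow> 0 * B"
    using assms(2,3) by (intro tendsto_mult LIMSEQ_power_zero tendsto_const) auto
  then show ?thesis
    using assms(1) by (simp add: LIMSEQ_le_const)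
qed

theorem theorem1:
  fixes E :: "'v::finite \<Rightarrow> 'v \<Rightarrow> bool"
    and T :: "('v \<Rightarrow> real) \<Rightarrow> ('v \<Rightarrow> real) \<Rightarrow> ('v \<Rightarrow> real)"
    and Cs Cd \<alpha> a :: real and D :: "'v \<Rightarrow> real" and v :: 'v
  assumes sym: "\<And>x y. E x y \<Longrightarrow> E y x"
    and irrefl: "\<And>x. \<not> E x x"
    and edge: "\<exists>x y. E x y"
    and local: "\<And>o1 o2 d1 d2 u. (\<forall>w. (E u w \<or> w = u) \<longrightarrow> o1 w = o2 w) \<Longrightarrow> d1 u = d2 u
                  \<Longrightarrow> T o1 d1 u = T o2 d2 u"
    and lip: "\<And>o1 o2 d1 d2. l1norm (\<lambda>u. T o1 d1 u - T o2 d2 u)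
                  \<le> Cs * l1norm (\<lambda>u. o1 u - o2 u) + Cd * (l1norm (\<lambda>u. d1 u - d2 u)) powr \<alpha>"
    and Cs_pos: "Cs > 0" and Cd_pos: "Cd > 0"
    and alpha: "0 < \<alpha>" "\<alpha> \<le> 1"
    and Cs_small: "Cs < 1 / (real (maxdeg E) + 1)"
    and a_pos: "a > 0"
  shows "\<forall>w. (gdist E w v = \<infinity> \<longrightarrow>
              \<bar>steady_state T D w - steady_state T (\<lambda>u. D u + (if u = v then a else 0)) w\<bar> = 0)
           \<and> (gdist E w v \<noteq> \<infinity> \<longrightarrow>
              \<bar>steady_state T D w - steady_state T (\<lambda>u. D u + (if u = v then a else 0)) w\<bar>
                < Cd * a powr \<alpha> * (Cs * (real (maxdeg E) + 1)) ^ (the_enat (gdist E v w))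
                  / (1 - Cs * (real (maxdeg E) + 1)))"
proof -
  define c where "c = Cs * (real (maxdeg E) + 1)"
  define D' where "D' = (\<lambda>u. D u + (if u = v then a else 0))"
  define x where "x = steady_state T D"
  define y where "y = steady_state T D'"
  have lip': "l1dist (T o1 d1) (T o2 d2) \<le> Cs * l1dist o1 o2 + Cd * l1dist d1 d2 powr \<alpha>" for o1 o2 d1 d2
    using lip unfolding l1dist_def .
  have contr: "l1dist (T o1 d) (T o2 d) \<le> Cs * l1dist o1 o2" for o1 o2 d
    using lip'[of o1 d o2 d] by simp
  have "1 \<le> maxdeg E"
    using edge maxdeg_pos by metis
  then have "Cs < c" and "c < 1"
    using Cs_pos Cs_small by (simp_all add: c_def field_simps)
  have fx: "T x D = x" and fy: "T y D' = y"
    unfolding x_def y_def using \<open>Cs < c\<close> \<open>c < 1\<close> by (auto intro: steady_state_fixpoint[OF contr])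
  have "l1dist x y \<le> Cd * a powr \<alpha> / (1 - Cs)"
    using l1dist_fixpoints_le[OF lip' fx fy] l1dist_add_point_mass[of a D v] a_pos \<open>c < 1\<close> \<open>Cs < c\<close>
    by (simp add: D'_def)
  also have "\<dots> < Cd * a powr \<alpha> / (1 - c)"
    using Cd_pos a_pos \<open>Cs < c\<close> \<open>c < 1\<close> by (intro divide_strict_left_mono) auto
  finally have B: "l1dist x y < Cd * a powr \<alpha> / (1 - c)" .
  have decay: "enat k \<le> gdist E v w \<Longrightarrow> \<bar>x w - y w\<bar> \<le> c ^ k * l1dist x y" for k w
    unfolding c_def using Cs_pos
    by (intro fixpoint_diff_decay[OF sym local contr _ fx fy]) (auto simp: D'_def)
  show ?thesis
    unfolding D'_def[symmetric] x_def[symmetric] y_def[symmetric] c_def[symmetric]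
  proof (intro allI conjI impI)
    fix w
    assume "gdist E w v = \<infinity>"
    then have "\<bar>x w - y w\<bar> \<le> 0"
      using decay gdist_sym[of E w v, OF sym] Cs_pos \<open>c < 1\<close>
      by (intro nonpos_if_le_geometric[of _ c "l1dist x y"]) (auto simp: c_def)
    then show "\<bar>x w - y w\<bar> = 0"
      by simp
  next
    fix w
    assume "gdist E w v \<noteq> \<infinity>"
    then have "\<bar>x w - y w\<bar> \<le> c ^ the_enat (gdist E v w) * l1dist x y"
      using gdist_sym[of E w v, OF sym] by (intro decay) auto
    also have "\<dots> < c ^ the_enat (gdist E v w) * (Cd * a powr \<alpha> / (1 - c))"
      using B Cs_pos by (intro mult_strict_left_mono) (auto simp: c_def)
    finally show "\<bar>x w - y w\<bar> < Cd * a powr \<alpha> * c ^ the_enat (gdist E v w) / (1 - c)"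
      by (simp add: field_simps)
  qed
qed

end
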